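(* Let $(x,y)$ be a random pair with values in $\mathcal{X}\times\{-1,+1\}$ with distribution $P$. Let $\Theta=\{\theta^{(1)},\dots,\theta^{(m)}\}$ be a finite set of hyperparameter values and, for each $k\in[m]$, let $f_{\theta^{(k)}}:\mathcal{X}\times\mathbb{R}\to\mathbb{R}$ satisfy the scalable-classifier assumption. Fix $\varepsilon,\delta\in(0,1)$ and an integer $r\ge1$. Let $\mathcal{Z}_c$ be $n_c\ge r$ i.i.d. samples from $P$, and let $\{\tilde x^U_j\}_{j=1}^{n_U}$ be the feature vectors of all samples in $\mathcal{Z}_c$ with label $-1$. For each $k\in[m]$ and $j\in[n_U]$ let $\bar\rho^{(k)}_j$ be the unique real with $f_{\theta^{(k)}}(\tilde x^U_j,\bar\rho^{(k)}_j)=0$; when $n_U\ge r$ set $\rho^{(k)}_\varepsilon=\max^{(r)}(\{\bar\rho^{(k)}_j\}_{j=1}^{n_U})$ and $\mathcal{S}^{(k)}_\varepsilon=\{x\in\mathcal{X}: f_{\theta^{(k)}}(x,\rho^{(k)}_\varepsilon)<0\}$, and set $\mathcal{S}^{(k)}_\varepsilon=\mathcal{X}$ if $n_U<r$. Then for every $k\in[m]$, $$\Pr_{\mathcal{Z}_c}\Big\{\Pr_{(x,y)\sim P}\{y=-1\ \text{and}\ x\in\mathcal{S}^{(k)}_\varepsilon\}\le\varepsilon\Big\}\ge 1-m\,\mathbf{B}(r-1;n_c,\varepsilon),$$ where $(x,y)$ is independent of $\mathcal{Z}_c$.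
   Context: Scalable-classifier assumption for $f_\theta$: for every $x\in\mathcal{X}$, the map $\rho\mapsto f_\theta(x,\rho)$ is continuous and strictly increasing, and $\lim_{\rho\to-\infty}f_\theta(x,\rho)<0<\lim_{\rho\to+\infty}f_\theta(x,\rho)$. $[m]=\{1,\dots,m\}$. Binomial CDF: $\mathbf{B}(k;n,\varepsilon)=\sum_{i=0}^{k}\binom{n}{i}\varepsilon^i(1-\varepsilon)^{n-i}$. Generalized max: for a finite collection $\Gamma=\{\gamma_i\}_{i=1}^n$ of reals and integer $r\in\{1,\dots,n\}$, order it as $\gamma_{(1)}\ge\dots\ge\gamma_{(n)}$ and set $\max^{(r)}(\Gamma)=\gamma_{(r)}$. *)

theory Defs
  imports "HOL-Probability.Probability"
begin

definition scalable_classifier :: "'a set \<Rightarrow> ('a \<Rightarrow> real \<Rightarrow> real) \<Rightarrow> bool" where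
  "scalable_classifier X g \<longleftrightarrow>
     (\<forall>x\<in>X. continuous_on UNIV (g x) \<and> strict_mono (g x) \<and>
        (\<exists>a b :: ereal. ((\<lambda>\<rho>. ereal (g x \<rho>)) \<longlongrightarrow> a) at_bot \<and>
                        ((\<lambda>\<rho>. ereal (g x \<rho>)) \<longlongrightarrow> b) at_top \<and> a < 0 \<and> 0 < b))"

definition binom_cdf :: "nat \<Rightarrow> nat \<Rightarrow> real \<Rightarrow> real" where
  "binom_cdf k n \<epsilon> = (\<Sum>i=0..k. real (n choose i) * \<epsilon> ^ i * (1 - \<epsilon>) ^ (n - i))"

definition genmax :: "nat \<Rightarrow> real list \<Rightarrow> real" where
  "genmax r \<Gamma> = rev (sort \<Gamma>) ! (r - 1)"

definition rho_bar :: "('a \<Rightarrow> real \<Rightarrow> real) \<Rightarrow> 'a \<Rightarrow> real" where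
  "rho_bar g x = (THE \<rho>. g x \<rho> = 0)"

definition neg_features :: "nat \<Rightarrow> (nat \<Rightarrow> 'a \<times> int) \<Rightarrow> 'a list" where
  "neg_features nc z = [fst (z i). i \<leftarrow> [0..<nc], snd (z i) = -1]"

definition S_eps :: "'a set \<Rightarrow> ('a \<Rightarrow> real \<Rightarrow> real) \<Rightarrow> nat \<Rightarrow> nat \<Rightarrow> (nat \<Rightarrow> 'a \<times> int) \<Rightarrow> 'a set" where
  "S_eps X g r nc z =
     (let xs = neg_features nc z in
      if length xs < r then X
      else {x \<in> X. g x (genmax r (map (rho_bar g) xs)) < 0})"

end

theory Submission
  imports Defs
begin

text \<open>Fix one hyperparameter and let W(\<rho>) be the probability that a fresh sample is negative
  with zero crossing \<open>rho_bar\<close> above \<rho>. W is nonincreasing and right-continuous, so if the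
  negatives have mass more than \<epsilon> there is a threshold \<tau> with W(\<rho>) \<le> \<epsilon> exactly for
  \<rho> \<ge> \<tau>, while the event C that a sample is negative with \<open>rho_bar\<close> \<ge> \<tau> still has
  probability at least \<epsilon>. As the calibrated threshold is the r-th largest zero crossing of the negative
  calibration samples, the calibrated set is bad exactly when fewer than r calibration samples fall
  into C; this count is binomial with success probability P(C) \<ge> \<epsilon>, and the binomial CDF is
  antitone in the success probability.\<close>

lemma sum_subsets_card_le:
  fixes h :: "nat \<Rightarrow> 'b::comm_semiring_1"
  shows "(\<Sum>J | J \<subseteq> {..<n} \<and> card J \<le> k. h (card J)) = (\<Sum>j=0..k. of_nat (n choose j) * h j)"
proof -
  let ?S = "{J. J \<subseteq> {..<n} \<and> card J \<le> k}"
  have "(\<Sum>J\<in>?S. h (card J)) = (\<Sum>j=0..k. \<Sum>J | J \<in> ?S \<and> card J = j. h (card J))"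
    by (rule sum.group[symmetric]) auto
  also have "\<dots> = (\<Sum>j=0..k. \<Sum>J | J \<subseteq> {..<n} \<and> card J = j. h (card J))"
    by (intro sum.cong refl arg_cong2[where f=sum]) auto
  also have "\<dots> = (\<Sum>j=0..k. of_nat (n choose j) * h j)"
    using n_subsets[of "{..<n}"] by (intro sum.cong) auto
  finally show ?thesis .
qed

lemma (in prob_space) measure_PiM_hits_eq:
  assumes C: "C \<in> events" and J: "J \<subseteq> {..<n}"
  shows "measure (PiM {..<n} (\<lambda>_. M)) {z \<in> space (PiM {..<n} (\<lambda>_. M)). {i\<in>{..<n}. z i \<in> C} = J}
    = prob C ^ card J * (1 - prob C) ^ (n - card J)"
proof -
  interpret F: finite_product_prob_space "\<lambda>_. M" "{..<n}"
    by unfold_locales simp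
  have "{z \<in> space (PiM {..<n} (\<lambda>_. M)). {i\<in>{..<n}. z i \<in> C} = J}
      = PiE {..<n} (\<lambda>i. if i \<in> J then C else space M - C)"
    using J sets.sets_into_space[OF C]
    by (auto simp: space_PiM PiE_iff extensional_def split: if_splits) blast+
  then have "measure (PiM {..<n} (\<lambda>_. M)) {z \<in> space (PiM {..<n} (\<lambda>_. M)). {i\<in>{..<n}. z i \<in> C} = J}
      = (\<Prod>i<n. if i \<in> J then prob C else 1 - prob C)"
    using C by (simp add: F.finite_measure_PiM_emb prob_compl if_distrib[of prob] cong: if_cong)
  also have "\<dots> = prob C ^ card J * (1 - prob C) ^ (n - card J)"
    using J by (simp add: prod.If_cases Int_absorb1 card_Diff_subset finite_subset Diff_eq[symmetric])
  finally show ?thesis .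
qed

lemma (in prob_space) measure_PiM_hits_le:
  assumes C: "C \<in> events"
  shows "{z \<in> space (PiM {..<n} (\<lambda>_. M)). card {i\<in>{..<n}. z i \<in> C} \<le> k} \<in> sets (PiM {..<n} (\<lambda>_. M))"
    and "measure (PiM {..<n} (\<lambda>_. M)) {z \<in> space (PiM {..<n} (\<lambda>_. M)). card {i\<in>{..<n}. z i \<in> C} \<le> k}
      = binom_cdf k n (prob C)"
proof -
  let ?\<Pi> = "PiM {..<n} (\<lambda>_. M)"
  interpret \<Pi>: prob_space ?\<Pi>
    by (intro prob_space_PiM prob_space_axioms)
  define H where "H J = {z \<in> space ?\<Pi>. {i\<in>{..<n}. z i \<in> C} = J}" for J
  define S where "S = {J. J \<subseteq> {..<n} \<and> card J \<le> k}"
  have H_sets: "H J \<in> sets ?\<Pi>" if "J \<in> S" for J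
  proof -
    have "H J = {z \<in> space ?\<Pi>. \<forall>i\<in>{..<n}. z i \<in> C \<longleftrightarrow> i \<in> J}"
      using that by (auto simp: H_def S_def)
    also have "\<dots> \<in> sets ?\<Pi>"
      using C by measurable
    finally show ?thesis .
  qed
  have split: "{z \<in> space ?\<Pi>. card {i\<in>{..<n}. z i \<in> C} \<le> k} = (\<Union>J\<in>S. H J)"
    by (auto simp: H_def S_def)
  show "{z \<in> space ?\<Pi>. card {i\<in>{..<n}. z i \<in> C} \<le> k} \<in> sets ?\<Pi>"
    unfolding split using H_sets by (intro sets.finite_UN) (auto simp: S_def)
  have "measure ?\<Pi> (\<Union>J\<in>S. H J) = (\<Sum>J\<in>S. measure ?\<Pi> (H J))"
    using H_sets by (intro measure_finite_Union) (auto simp: S_def H_def disjoint_family_on_def)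
  also have "\<dots> = (\<Sum>J\<in>S. prob C ^ card J * (1 - prob C) ^ (n - card J))"
    unfolding H_def using C by (intro sum.cong refl measure_PiM_hits_eq) (auto simp: S_def)
  also have "\<dots> = binom_cdf k n (prob C)"
    unfolding S_def binom_cdf_def
    using sum_subsets_card_le[where h="\<lambda>j. prob C ^ j * (1 - prob C) ^ (n - j)"] by (simp add: mult.assoc)
  finally show "measure ?\<Pi> {z \<in> space ?\<Pi>. card {i\<in>{..<n}. z i \<in> C} \<le> k} = binom_cdf k n (prob C)"
    unfolding split .
qed

lemma binom_cdf_nonneg:
  assumes "0 \<le> e" "e \<le> 1"
  shows "0 \<le> binom_cdf k n e"
  unfolding binom_cdf_def using assms by (intro sum_nonneg) auto

lemma binom_cdf_antimono:
  assumes "0 \<le> e" "e \<le> p" "p \<le> 1"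
  shows "binom_cdf k n p \<le> binom_cdf k n e"
proof -
  \<comment> \<open>Couple both laws through uniform coordinates: hitting [0, e] implies hitting [0, p].\<close>
  define U where "U = uniform_measure lborel {0..1::real}"
  interpret U: prob_space U
    unfolding U_def by (rule prob_space_uniform_measure) auto
  have U_interval: "U.prob {0..q} = q" if "0 \<le> q" "q \<le> 1" for q
    using that by (simp add: U_def Int_absorb1)
  have U_events: "{0..q} \<in> U.events" for q :: real
    by (simp add: U_def)
  let ?\<Pi> = "PiM {..<n} (\<lambda>_. U)"
  let ?A = "\<lambda>q. {z \<in> space ?\<Pi>. card {i\<in>{..<n}. z i \<in> {0..q}} \<le> k}"
  interpret \<Pi>: prob_space ?\<Pi>
    by (intro prob_space_PiM U.prob_space_axioms)
  have "binom_cdf k n p = binom_cdf k n (U.prob {0..p})"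
    using U_interval assms by simp
  also have "\<dots> = measure ?\<Pi> (?A p)"
    by (rule U.measure_PiM_hits_le(2)[OF U_events, symmetric])
  also have "\<dots> \<le> measure ?\<Pi> (?A e)"
  proof (rule \<Pi>.finite_measure_mono)
    show "?A p \<subseteq> ?A e"
    proof
      fix z assume z: "z \<in> ?A p"
      have "card {i\<in>{..<n}. z i \<in> {0..e}} \<le> card {i\<in>{..<n}. z i \<in> {0..p}}"
        using assms by (intro card_mono) auto
      with z show "z \<in> ?A e"
        by simp
    qed
  qed (rule U.measure_PiM_hits_le(1)[OF U_events])
  also have "\<dots> = binom_cdf k n (U.prob {0..e})"
    by (rule U.measure_PiM_hits_le(2)[OF U_events])
  also have "\<dots> = binom_cdf k n e"
    using U_interval assms by simp
  finally show ?thesis .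
qed

lemma (in finite_borel_measure) cdf_quantile:
  assumes "0 < c" "c < measure M UNIV"
  obtains \<tau> where "\<And>\<rho>. c \<le> cdf M \<rho> \<longleftrightarrow> \<tau> \<le> \<rho>" "measure M {..<\<tau>} \<le> c"
proof -
  define S where "S = {\<rho>. c \<le> cdf M \<rho>}"
  have "\<forall>\<^sub>F \<rho> in at_top. c < cdf M \<rho>"
    using order_tendstoD(1)[OF cdf_lim_at_top] assms(2) by (simp add: borel_UNIV)
  then have S_ne: "S \<noteq> {}" by (auto simp: S_def eventually_at_top_linorder intro: less_imp_le)
  have "\<forall>\<^sub>F \<rho> in at_bot. cdf M \<rho> < c"
    using order_tendstoD(2)[OF cdf_lim_at_bot] assms(1) .
  then obtain b where b: "\<And>\<rho>. \<rho> \<le> b \<Longrightarrow> cdf M \<rho> < c" by (auto simp: eventually_at_bot_linorder)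
  have bdd: "bdd_below S"
  proof (rule bdd_belowI)
    show "b \<le> s" if "s \<in> S" for s
      using that b[of s] by (cases "s \<le> b") (auto simp: S_def)
  qed
  define \<tau> where "\<tau> = Inf S"
  have above: "c \<le> cdf M \<rho>" if "\<tau> < \<rho>" for \<rho>
  proof -
    obtain s where "s \<in> S" "s < \<rho>"
      using \<open>\<tau> < \<rho>\<close> cInf_less_iff[OF S_ne bdd] unfolding \<tau>_def by auto
    then show ?thesis using cdf_nondecreasing[of s \<rho>] by (simp add: S_def)
  qed
  \<comment> \<open>Right-continuity of the CDF puts the infimum \<tau> itself into S.\<close>
  have "c \<le> cdf M \<tau>"
  proof (rule tendsto_lowerbound)
    show "(cdf M \<longlongrightarrow> cdf M \<tau>) (at_right \<tau>)"
      using cdf_is_right_cont[of \<tau>] by (simp add: continuous_within)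
    show "\<forall>\<^sub>F \<rho> in at_right \<tau>. c \<le> cdf M \<rho>"
      using eventually_at_right_less by (rule eventually_mono) (rule above)
  qed simp
  then have "c \<le> cdf M \<rho> \<longleftrightarrow> \<tau> \<le> \<rho>" for \<rho>
    using cdf_nondecreasing[of \<tau> \<rho>] cInf_lower[OF _ bdd, of \<rho>] unfolding S_def \<tau>_def by auto
  moreover have "measure M {..<\<tau>} \<le> c"
  proof (rule tendsto_upperbound[OF cdf_at_left])
    have "cdf M \<rho> \<le> c" if "\<rho> < \<tau>" for \<rho>
      using that cInf_lower[OF _ bdd, of \<rho>] unfolding S_def \<tau>_def by force
    then show "\<forall>\<^sub>F \<rho> in at_left \<tau>. cdf M \<rho> \<le> c"
      by (intro eventually_at_leftI[of "\<tau> - 1"]) auto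
  qed simp
  ultimately show ?thesis using that by blast
qed

lemma (in finite_measure) upper_tail_threshold:
  fixes h :: "'a \<Rightarrow> real"
  assumes A: "A \<in> sets M" and h: "h \<in> borel_measurable M" and "0 < \<epsilon>" "\<epsilon> < measure M A"
  obtains \<tau> where "\<And>\<rho>. measure M {x\<in>A. \<rho> < h x} \<le> \<epsilon> \<longleftrightarrow> \<tau> \<le> \<rho>"
    "\<epsilon> \<le> measure M {x\<in>A. \<tau> \<le> h x}"
proof -
  define \<mu> where "\<mu> = distr (restrict_space M A) borel h"
  have A_sub: "A \<subseteq> space M" using A by (rule sets.sets_into_space)
  have \<mu>_eq: "measure \<mu> B = measure M {x\<in>A. h x \<in> B}" if "B \<in> sets borel" for B
  proof -
    have "h -` B \<inter> space (restrict_space M A) = {x\<in>A. h x \<in> B}"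
      using A_sub by (auto simp: space_restrict_space)
    moreover have "{x\<in>A. h x \<in> B} \<in> sets M"
      using that A h by measurable
    ultimately show ?thesis
      unfolding \<mu>_def using A that h
      by (subst measure_distr) (auto intro: measurable_restrict_space1 simp: measure_restrict_space)
  qed
  have "finite_measure (restrict_space M A)"
    using A by (intro finite_measureI) (simp add: space_restrict_space emeasure_restrict_space)
  then interpret \<mu>: finite_borel_measure \<mu>
    unfolding \<mu>_def finite_borel_measure_def finite_borel_measure_axioms_def
    using h by (auto intro: finite_measure.finite_measure_distr measurable_restrict_space1)
  have cdf_eq: "cdf \<mu> \<rho> = measure M {x\<in>A. \<not> \<rho> < h x}" for \<rho>
    unfolding cdf_def by (subst \<mu>_eq) (auto simp: not_less)
  have tail_eq: "measure M {x\<in>A. Q x} = measure M A - measure M {x\<in>A. \<not> Q x}"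
    if "{x\<in>A. \<not> Q x} \<in> sets M" for Q
  proof -
    have "{x\<in>A. Q x} = A - {x\<in>A. \<not> Q x}" by auto
    then show ?thesis using finite_measure_Diff[OF A that] by auto
  qed
  obtain \<tau> where \<tau>: "\<And>\<rho>. measure M A - \<epsilon> \<le> cdf \<mu> \<rho> \<longleftrightarrow> \<tau> \<le> \<rho>"
    "measure \<mu> {..<\<tau>} \<le> measure M A - \<epsilon>"
    by (rule \<mu>.cdf_quantile[of "measure M A - \<epsilon>"]) (use assms \<mu>_eq[of UNIV] in auto)
  show ?thesis
  proof
    show "measure M {x\<in>A. \<rho> < h x} \<le> \<epsilon> \<longleftrightarrow> \<tau> \<le> \<rho>" for \<rho>
      using \<tau>(1)[of \<rho>] tail_eq[of "\<lambda>x. \<rho> < h x"] A h unfolding cdf_eq by auto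
    show "\<epsilon> \<le> measure M {x\<in>A. \<tau> \<le> h x}"
      using \<tau>(2) tail_eq[of "\<lambda>x. \<tau> \<le> h x"] A h \<mu>_eq[of "{..<\<tau>}"] by (auto simp: not_le)
  qed
qed

lemma genmax_iff_upclosed:
  assumes "1 \<le> r" "r \<le> length xs" and up: "\<And>x y. Q x \<Longrightarrow> x \<le> y \<Longrightarrow> Q y"
  shows "Q (genmax r xs) \<longleftrightarrow> r \<le> length (filter Q xs)"
proof -
  define ys where "ys = rev (sort xs)"
  define I where "I = {i. i < length ys \<and> Q (ys ! i)}"
  have "length (filter Q xs) = length (filter Q ys)"
    unfolding ys_def by (metis length_rev mset_filter mset_sort rev_filter size_mset)
  also have "\<dots> = card I"
    unfolding I_def by (rule length_filter_conv_card)
  finally have card_I: "length (filter Q xs) = card I" .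
  have sorted: "sorted_wrt (\<ge>) ys"
    unfolding ys_def by (simp add: sorted_wrt_rev)
  have desc: "ys ! j \<le> ys ! i" if "i \<le> j" "j < length ys" for i j
  proof (cases "i = j")
    case False
    then show ?thesis
      using sorted_wrt_nth_less[OF sorted, of i j] that by simp
  qed simp
  have r_len: "r - 1 < length ys"
    using assms(1,2) by (simp add: ys_def)
  have gm: "genmax r xs = ys ! (r - 1)"
    by (simp add: genmax_def ys_def)
  show ?thesis
  proof
    assume Q_gm: "Q (genmax r xs)"
    have "{..<r} \<subseteq> I"
    proof
      fix i assume "i \<in> {..<r}"
      then have "i \<le> r - 1" by simp
      then show "i \<in> I"
        using up[OF Q_gm[unfolded gm] desc] r_len unfolding I_def by simp
    qed
    then have "card {..<r} \<le> card I"
      by (rule card_mono[rotated]) (simp add: I_def)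
    then show "r \<le> length (filter Q xs)"
      by (simp add: card_I)
  next
    assume r_le: "r \<le> length (filter Q xs)"
    show "Q (genmax r xs)"
    proof (rule ccontr)
      assume not_Q: "\<not> Q (genmax r xs)"
      have "I \<subseteq> {..<r - 1}"
      proof
        fix i assume "i \<in> I"
        then have "i < length ys" "Q (ys ! i)"
          by (simp_all add: I_def)
        then show "i \<in> {..<r - 1}"
          using not_Q up[of "ys ! i" "ys ! (r - 1)"] desc[of "r - 1" i] unfolding gm by fastforce
      qed
      then have "card I \<le> r - 1"
        using card_mono[of "{..<r - 1}" I] by simp
      then show False
        using r_le assms(1) card_I by simp
    qed
  qed
qed

lemma rho_bar_less_iff:
  assumes "scalable_classifier X g" "x \<in> X"
  shows "g x \<rho> < 0 \<longleftrightarrow> \<rho> < rho_bar g x"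
proof -
  obtain a b :: ereal where cont: "continuous_on UNIV (g x)" and mono: "strict_mono (g x)"
    and lim_bot: "((\<lambda>\<rho>. ereal (g x \<rho>)) \<longlongrightarrow> a) at_bot" and "a < 0"
    and lim_top: "((\<lambda>\<rho>. ereal (g x \<rho>)) \<longlongrightarrow> b) at_top" and "0 < b"
    using assms unfolding scalable_classifier_def by blast
  obtain r1 where r1: "g x r1 < 0"
    using order_tendstoD(2)[OF lim_bot \<open>a < 0\<close>] by (auto simp: eventually_at_bot_linorder)
  obtain r2 where r2: "0 < g x r2"
    using order_tendstoD(1)[OF lim_top \<open>0 < b\<close>] by (auto simp: eventually_at_top_linorder)
  have "r1 \<le> r2"
  proof (rule ccontr)
    assume "\<not> r1 \<le> r2"
    then have "g x r2 < g x r1"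
      using mono by (simp add: strict_mono_less)
    then show False
      using r1 r2 by simp
  qed
  moreover have "continuous_on {r1..r2} (g x)"
    using cont by (rule continuous_on_subset) simp
  ultimately obtain c where c: "g x c = 0"
    using IVT'[of "g x" r1 0 r2] r1 r2 by (auto simp: less_imp_le)
  have "rho_bar g x = c"
    unfolding rho_bar_def using c by (rule the_equality) (metis c mono strict_mono_eq)
  then show ?thesis
    using strict_mono_less[OF mono, of \<rho> c] c by simp
qed

lemma borel_measurable_rho_bar:
  assumes "scalable_classifier (space M) g" "\<And>\<rho>. (\<lambda>x. g x \<rho>) \<in> borel_measurable M"
  shows "rho_bar g \<in> borel_measurable M"
proof (unfold borel_measurable_iff_greater, intro allI)
  fix \<rho>
  have "{x \<in> space M. \<rho> < rho_bar g x} = {x \<in> space M. g x \<rho> < 0}"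
    using rho_bar_less_iff[OF assms(1)] by blast
  also have "\<dots> \<in> sets M"
    using assms(2) by measurable
  finally show "{x \<in> space M. \<rho> < rho_bar g x} \<in> sets M" .
qed

lemma length_filter_neg_features:
  "length (filter Q (neg_features n z)) = card {i\<in>{..<n}. snd (z i) = -1 \<and> Q (fst (z i))}"
proof (induction n)
  case 0
  then show ?case by (simp add: neg_features_def)
next
  case (Suc n)
  have "{i\<in>{..<Suc n}. snd (z i) = -1 \<and> Q (fst (z i))} =
      (if snd (z n) = -1 \<and> Q (fst (z n)) then insert n else id) {i\<in>{..<n}. snd (z i) = -1 \<and> Q (fst (z i))}"
    by (auto simp: less_Suc_eq)
  then show ?case
    using Suc by (simp add: neg_features_def)
qed

lemma calibration_bound:
  fixes M :: "'a measure" and P :: "('a \<times> int) measure" and g :: "'a \<Rightarrow> real \<Rightarrow> real"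
  assumes P: "prob_space P" and sets_P: "sets P = sets (M \<Otimes>\<^sub>M count_space UNIV)"
    and g: "scalable_classifier (space M) g" and g_meas: "\<And>\<rho>. (\<lambda>x. g x \<rho>) \<in> borel_measurable M"
    and \<epsilon>: "0 < \<epsilon>" "\<epsilon> \<le> 1" and r: "1 \<le> r"
  shows "1 - binom_cdf (r - 1) nc \<epsilon> \<le> measure (PiM {..<nc} (\<lambda>_. P))
     {z \<in> space (PiM {..<nc} (\<lambda>_. P)).
        measure P {(x, y) \<in> space P. y = -1 \<and> x \<in> S_eps (space M) g r nc z} \<le> \<epsilon>}"
proof -
  interpret P: prob_space P by (rule P)
  let ?\<Pi> = "PiM {..<nc} (\<lambda>_. P)"
  interpret \<Pi>: prob_space ?\<Pi>
    by (intro prob_space_PiM P)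
  let ?E = "\<lambda>z. {(x, y) \<in> space P. y = -1 \<and> x \<in> S_eps (space M) g r nc z}"
  let ?xs = "\<lambda>z. neg_features nc z"
  define A where "A = {p \<in> space P. snd p = -1}"
  define h where "h p = rho_bar g (fst p)" for p :: "'a \<times> int"
  have space_P: "space P = space M \<times> UNIV"
    using sets_eq_imp_space_eq[OF sets_P] by (simp add: space_pair_measure)
  have "A = space M \<times> {-1}"
    unfolding A_def space_P by auto
  then have A_sets: "A \<in> P.events"
    unfolding sets_P by auto
  have h_meas: "h \<in> borel_measurable P"
    unfolding h_def measurable_cong_sets[OF sets_P refl]
    by (intro measurable_compose[OF measurable_fst] borel_measurable_rho_bar g g_meas)
  have E_eq: "?E z = (if length (?xs z) < r then A else {p\<in>A. genmax r (map (rho_bar g) (?xs z)) < h p})" for z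
    unfolding S_eps_def A_def h_def using rho_bar_less_iff[OF g] space_P by (auto simp: Let_def)
  have hits: "length (filter Q (map (rho_bar g) (?xs z))) = card {i\<in>{..<nc}. z i \<in> {p\<in>A. Q (h p)}}"
    if "z \<in> space ?\<Pi>" for z Q
  proof -
    have "length (filter Q (map (rho_bar g) (?xs z)))
        = card {i\<in>{..<nc}. snd (z i) = -1 \<and> Q (rho_bar g (fst (z i)))}"
      by (simp add: filter_map length_filter_neg_features comp_def)
    also have "\<dots> = card {i\<in>{..<nc}. z i \<in> {p\<in>A. Q (h p)}}"
      using that by (intro arg_cong[where f=card]) (auto simp: A_def h_def space_PiM PiE_iff)
    finally show ?thesis .
  qed
  show ?thesis
  proof (cases "P.prob A \<le> \<epsilon>")
    case True
    have "P.prob (?E z) \<le> P.prob A" for z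
      unfolding E_eq by (auto intro!: P.finite_measure_mono[OF _ A_sets])
    then have "P.prob (?E z) \<le> \<epsilon>" for z
      using True order_trans by blast
    then show ?thesis
      using binom_cdf_nonneg[of \<epsilon>] \<epsilon> by (simp add: \<Pi>.prob_space)
  next
    case False
    then obtain \<tau> where \<tau>: "\<And>\<rho>. P.prob {p\<in>A. \<rho> < h p} \<le> \<epsilon> \<longleftrightarrow> \<tau> \<le> \<rho>"
      and C: "\<epsilon> \<le> P.prob {p\<in>A. \<tau> \<le> h p}"
      using P.upper_tail_threshold[OF A_sets h_meas \<epsilon>(1)] by (auto simp: not_le)
    define C where "C = {p\<in>A. \<tau> \<le> h p}"
    have C_sets: "C \<in> P.events"
      unfolding C_def using A_sets h_meas by measurable
    have good_iff: "P.prob (?E z) \<le> \<epsilon> \<longleftrightarrow> r \<le> card {i\<in>{..<nc}. z i \<in> C}"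
      if z: "z \<in> space ?\<Pi>" for z
    proof (cases "length (?xs z) < r")
      case True
      have "card {i\<in>{..<nc}. z i \<in> C} \<le> card {i\<in>{..<nc}. z i \<in> {p\<in>A. True}}"
        by (intro card_mono) (auto simp: C_def)
      also have "\<dots> = length (?xs z)"
        using hits[OF z, of "\<lambda>_. True"] by simp
      finally show ?thesis
        using True False unfolding E_eq by simp
    next
      case False
      then have "P.prob (?E z) \<le> \<epsilon> \<longleftrightarrow> \<tau> \<le> genmax r (map (rho_bar g) (?xs z))"
        unfolding E_eq by (simp add: \<tau>)
      also have "\<dots> \<longleftrightarrow> r \<le> length (filter ((\<le>) \<tau>) (map (rho_bar g) (?xs z)))"
        using False r by (intro genmax_iff_upclosed) auto
      finally show ?thesis
        unfolding hits[OF z] C_def .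
    qed
    let ?few = "{z \<in> space ?\<Pi>. card {i\<in>{..<nc}. z i \<in> C} \<le> r - 1}"
    have "{z \<in> space ?\<Pi>. P.prob (?E z) \<le> \<epsilon>} = {z \<in> space ?\<Pi>. r \<le> card {i\<in>{..<nc}. z i \<in> C}}"
      by (intro Collect_cong conj_cong refl good_iff)
    also have "\<dots> = space ?\<Pi> - ?few"
      using r by auto
    finally have "\<Pi>.prob {z \<in> space ?\<Pi>. P.prob (?E z) \<le> \<epsilon>} = 1 - \<Pi>.prob ?few"
      using \<Pi>.prob_compl[OF P.measure_PiM_hits_le(1)[OF C_sets]] by simp
    also have "\<dots> = 1 - binom_cdf (r - 1) nc (P.prob C)"
      using P.measure_PiM_hits_le(2)[OF C_sets] by simp
    also have "\<dots> \<ge> 1 - binom_cdf (r - 1) nc \<epsilon>"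
      using C \<epsilon> by (simp add: binom_cdf_antimono C_def)
    finally show ?thesis .
  qed
qed

theorem theorem2:
  fixes M :: "'a measure" and P :: "('a \<times> int) measure"
    and \<theta> :: "nat \<Rightarrow> 'p" and f :: "'p \<Rightarrow> 'a \<Rightarrow> real \<Rightarrow> real"
    and m nc r :: nat and \<epsilon> \<delta> :: real
  assumes "prob_space P"
    and "sets P = sets (M \<Otimes>\<^sub>M count_space UNIV)"
    and "AE z in P. snd z \<in> {-1, 1}"
    and "inj_on \<theta> {1..m}"
    and "\<forall>k\<in>{1..m}. scalable_classifier (space M) (f (\<theta> k))"
    and "\<forall>k\<in>{1..m}. \<forall>\<rho>. (\<lambda>x. f (\<theta> k) x \<rho>) \<in> borel_measurable M"
    and "0 < \<epsilon>" "\<epsilon> < 1" "0 < \<delta>" "\<delta> < 1"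
    and "1 \<le> r" "r \<le> nc"
  shows "\<forall>k\<in>{1..m}.
     measure (PiM {..<nc} (\<lambda>_. P))
       {z \<in> space (PiM {..<nc} (\<lambda>_. P)).
          measure P {(x, y) \<in> space P. y = -1 \<and> x \<in> S_eps (space M) (f (\<theta> k)) r nc z} \<le> \<epsilon>}
     \<ge> 1 - real m * binom_cdf (r - 1) nc \<epsilon>"
proof
  fix k assume k: "k \<in> {1..m}"
  have "binom_cdf (r - 1) nc \<epsilon> \<le> real m * binom_cdf (r - 1) nc \<epsilon>"
    using k binom_cdf_nonneg[of \<epsilon> "r - 1" nc] assms(7,8) by (simp add: mult_le_cancel_right1)
  with calibration_bound[OF assms(1,2) assms(5)[rule_format, OF k] assms(6)[rule_format, OF k]
      assms(7) less_imp_le[OF assms(8)] assms(11), where nc=nc]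
  show "measure (PiM {..<nc} (\<lambda>_. P))
       {z \<in> space (PiM {..<nc} (\<lambda>_. P)).
          measure P {(x, y) \<in> space P. y = -1 \<and> x \<in> S_eps (space M) (f (\<theta> k)) r nc z} \<le> \<epsilon>}
     \<ge> 1 - real m * binom_cdf (r - 1) nc \<epsilon>"
    by linarith
qed

end
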